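(* Let $J$ be a complex structure on a $2$-step nilpotent real Lie algebra $\mathfrak{n}$ with center $\mathfrak{z}$ and commutator ideal $\mathfrak{n}'$. If $\mathfrak{z}_0$ is an ideal of $\mathfrak{n}$ with $\mathfrak{n}'\subset\mathfrak{z}_0\subset\mathfrak{z}$, then $J\mathfrak{z}_0$ is an abelian ideal of $\mathfrak{n}$.
   Context: A complex structure on a real Lie algebra $\mathfrak{g}$ is a linear map $J:\mathfrak{g}\to\mathfrak{g}$ with $J^2=-I$ and $N_J(x,y):=[x,y]+J([Jx,y]+[x,Jy])-[Jx,Jy]=0$ for all $x,y\in\mathfrak{g}$. A Lie algebra $\mathfrak{n}$ is $2$-step nilpotent if it is non-abelian and $\mathfrak{n}'=[\mathfrak{n},\mathfrak{n}]\subset\mathfrak{z}$. *)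

theory Defs
  imports Main "HOL.Real_Vector_Spaces"
begin

definition lie_algebra :: "('a::real_vector \<Rightarrow> 'a \<Rightarrow> 'a) \<Rightarrow> bool" where
  "lie_algebra br \<longleftrightarrow>
     (\<forall>x. linear (br x)) \<and> (\<forall>y. linear (\<lambda>x. br x y)) \<and>
     (\<forall>x. br x x = 0) \<and>
     (\<forall>x y z. br x (br y z) + br y (br z x) + br z (br x y) = 0)"

definition complex_structure :: "('a::real_vector \<Rightarrow> 'a \<Rightarrow> 'a) \<Rightarrow> ('a \<Rightarrow> 'a) \<Rightarrow> bool" where
  "complex_structure br J \<longleftrightarrow> linear J \<and> (\<forall>x. J (J x) = - x) \<and>
     (\<forall>x y. br x y + J (br (J x) y + br x (J y)) - br (J x) (J y) = 0)"

definition lie_center :: "('a::real_vector \<Rightarrow> 'a \<Rightarrow> 'a) \<Rightarrow> 'a set" where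
  "lie_center br = {z. \<forall>x. br x z = 0}"

definition commutator_ideal :: "('a::real_vector \<Rightarrow> 'a \<Rightarrow> 'a) \<Rightarrow> 'a set" where
  "commutator_ideal br = span {br x y | x y. True}"

definition lie_ideal :: "('a::real_vector \<Rightarrow> 'a \<Rightarrow> 'a) \<Rightarrow> 'a set \<Rightarrow> bool" where
  "lie_ideal br S \<longleftrightarrow> subspace S \<and> (\<forall>x y. y \<in> S \<longrightarrow> br x y \<in> S)"

definition abelian_ideal :: "('a::real_vector \<Rightarrow> 'a \<Rightarrow> 'a) \<Rightarrow> 'a set \<Rightarrow> bool" where
  "abelian_ideal br S \<longleftrightarrow> lie_ideal br S \<and> (\<forall>x\<in>S. \<forall>y\<in>S. br x y = 0)"

definition two_step_nilpotent :: "('a::real_vector \<Rightarrow> 'a \<Rightarrow> 'a) \<Rightarrow> bool" where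
  "two_step_nilpotent br \<longleftrightarrow> (\<exists>x y. br x y \<noteq> 0) \<and> commutator_ideal br \<subseteq> lie_center br"

end

theory Submission
  imports Defs
begin

text \<open>For central \<open>z\<close> the integrability condition \<open>N\<^sub>J(x, z) = 0\<close> collapses to
  \<open>J[x, Jz] = [Jx, Jz]\<close>. Hence \<open>[x, Jz] = -J[Jx, Jz]\<close> lies in \<open>J\<close> applied to the commutator
  ideal, which is contained in \<open>J z\<^sub>0\<close>; and if \<open>w\<close> is central as well, then all other terms of
  \<open>N\<^sub>J(z, w)\<close> vanish, leaving \<open>[Jz, Jw] = 0\<close>.\<close>

lemma lie_bracket_antisym:
  assumes "lie_algebra br"
  shows "br x y = - br y x"
proof -
  from assms have lin_right: "linear (br u)" and lin_left: "linear (\<lambda>v. br v w)"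
    and alt: "br v v = 0" for u v w
    unfolding lie_algebra_def by auto
  have "0 = br (x + y) (x + y)" using alt by simp
  also have "\<dots> = br x x + br x y + br y x + br y y"
    using linear_add[OF lin_left] linear_add[OF lin_right] by simp
  also have "\<dots> = br x y + br y x" using alt by simp
  finally show ?thesis by (simp add: eq_neg_iff_add_eq_0)
qed

lemma bracket_in_commutator_ideal: "br x y \<in> commutator_ideal br"
  unfolding commutator_ideal_def by (rule span_base) blast

lemma complex_structure_bracket_center:
  assumes "complex_structure br J" and "z \<in> lie_center br"
  shows "br x (J z) = J (- br (J x) (J z))"
proof -
  have lin: "linear J" and JJ: "\<And>v. J (J v) = - v"
    and N: "br x z + J (br (J x) z + br x (J z)) - br (J x) (J z) = 0"
    using assms(1) unfolding complex_structure_def by auto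
  have "J (br x (J z)) = br (J x) (J z)"
    using N assms(2) unfolding lie_center_def by simp
  then have "br x (J z) = - J (br (J x) (J z))"
    by (metis JJ minus_minus)
  then show ?thesis by (simp add: linear_neg[OF lin])
qed

lemma complex_structure_bracket_center_center:
  assumes "lie_algebra br" and "complex_structure br J"
    and "z \<in> lie_center br" and "w \<in> lie_center br"
  shows "br (J z) (J w) = 0"
proof -
  have lin: "linear J"
    and N: "br z w + J (br (J z) w + br z (J w)) - br (J z) (J w) = 0"
    using assms(2) unfolding complex_structure_def by auto
  have "br z (J w) = 0"
    using lie_bracket_antisym[OF assms(1), of z "J w"] assms(3) unfolding lie_center_def by simp
  then show ?thesis
    using N assms(4) linear_0[OF lin] unfolding lie_center_def by simp
qed

lemma lie_ideal_image_complex_structure: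
  assumes "complex_structure br J" and "subspace S"
    and "commutator_ideal br \<subseteq> S" and "S \<subseteq> lie_center br"
  shows "lie_ideal br (J ` S)"
  unfolding lie_ideal_def
proof (intro conjI allI impI)
  show "subspace (J ` S)"
    using assms(1,2) linear_subspace_image unfolding complex_structure_def by blast
next
  fix x y
  assume "y \<in> J ` S"
  then obtain z where z: "z \<in> S" "y = J z" by blast
  have "- br (J x) (J z) \<in> S"
    using assms(2,3) bracket_in_commutator_ideal subspace_neg by blast
  then show "br x y \<in> J ` S"
    using complex_structure_bracket_center[OF assms(1)] z assms(4) by blast
qed

theorem mainTheorem3:
  fixes br :: "'a::real_vector \<Rightarrow> 'a \<Rightarrow> 'a" and J :: "'a \<Rightarrow> 'a" and z0 :: "'a set"
  assumes "lie_algebra br"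
    and "two_step_nilpotent br"
    and "complex_structure br J"
    and "lie_ideal br z0"
    and "commutator_ideal br \<subseteq> z0"
    and "z0 \<subseteq> lie_center br"
  shows "abelian_ideal br (J ` z0)"
proof -
  have "subspace z0" using assms(4) unfolding lie_ideal_def by blast
  then have "lie_ideal br (J ` z0)"
    using lie_ideal_image_complex_structure assms(3,5,6) by blast
  moreover have "br x y = 0" if "x \<in> J ` z0" "y \<in> J ` z0" for x y
    using that complex_structure_bracket_center_center[OF assms(1,3)] assms(6) by blast
  ultimately show ?thesis unfolding abelian_ideal_def by blast
qed

end
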